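(* Let $(\Gamma(-),X)$ be a finite graph of finite groups with fundamental group $\Gamma=\pi_1(\Gamma(-),X)$, and let $T$ be a maximal (spanning) tree of $X$ such that \[ \Gamma(e)^e\neq\Gamma(t(e))\quad\text{and}\quad\Gamma(e)^{\bar e}\neq\Gamma(o(e))\qquad\text{for all } e\in E(T). \] Then the number $|E(X)|$ of (directed) edges of $X$ satisfies $|E(X)|\le 2\mu(\Gamma)$.
   Context: Graphs are in the sense of Serre: vertex set $V(X)$, set $E(X)$ of directed edges with fixed-point-free involution $e\mapsto\bar e$, maps $o,t:E(X)\to V(X)$ with $t(\bar e)=o(e)$. A graph of groups assigns groups $\Gamma(v)$, $\Gamma(e)=\Gamma(\bar e)$ and monomorphisms $\Gamma(e)\to\Gamma(t(e))$, $a\mapsto a^e$; $\Gamma(e)^e\le\Gamma(t(e))$ and $\Gamma(e)^{\bar e}\le\Gamma(o(e))$ denote the images. $\Gamma$ is then a finitely generated virtually free group. Let $m_\Gamma$ be the least common multiple of the orders of the finite subgroups of $\Gamma$ (equivalently $\operatorname{lcm}\{|\Gamma(v)|:v\in V(X)\}$). The free rank $\mu(\Gamma)$ is the rank of a free subgroup of index $m_\Gamma$ in $\Gamma$; equivalently $\mu(\Gamma)=1-m_\Gamma\chi(\Gamma)$ where $\chi(\Gamma)=\sum_{v\in V(X)}|\Gamma(v)|^{-1}-\sum_{e\in\mathcal O(X)}|\Gamma(e)|^{-1}$ for any orientation $\mathcal O(X)$ (one edge chosen from each pair $\{e,\bar e\}$). *)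

theory Defs
  imports Complex_Main "HOL-Algebra.Coset"
begin

definition serre_graph ::
  "'v set \<Rightarrow> 'e set \<Rightarrow> ('e \<Rightarrow> 'e) \<Rightarrow> ('e \<Rightarrow> 'v) \<Rightarrow> ('e \<Rightarrow> 'v) \<Rightarrow> bool" where
  "serre_graph V E bar src tgt \<longleftrightarrow>
     (\<forall>e\<in>E. bar e \<in> E \<and> bar (bar e) = e \<and> bar e \<noteq> e \<and>
             src e \<in> V \<and> tgt e \<in> V \<and> tgt (bar e) = src e)"

fun is_path :: "'e set \<Rightarrow> ('e \<Rightarrow> 'v) \<Rightarrow> ('e \<Rightarrow> 'v) \<Rightarrow> 'v \<Rightarrow> 'e list \<Rightarrow> 'v \<Rightarrow> bool" where
  "is_path F src tgt u [] w \<longleftrightarrow> u = w"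
| "is_path F src tgt u (e # es) w \<longleftrightarrow> e \<in> F \<and> src e = u \<and> is_path F src tgt (tgt e) es w"

fun reduced :: "('e \<Rightarrow> 'e) \<Rightarrow> 'e list \<Rightarrow> bool" where
  "reduced bar (e1 # e2 # es) \<longleftrightarrow> e2 \<noteq> bar e1 \<and> reduced bar (e2 # es)"
| "reduced bar _ \<longleftrightarrow> True"

definition spanning_tree ::
  "'v set \<Rightarrow> 'e set \<Rightarrow> ('e \<Rightarrow> 'e) \<Rightarrow> ('e \<Rightarrow> 'v) \<Rightarrow> ('e \<Rightarrow> 'v) \<Rightarrow> 'e set \<Rightarrow> bool" where
  "spanning_tree V E bar src tgt T \<longleftrightarrow>
     T \<subseteq> E \<and> (\<forall>e\<in>T. bar e \<in> T) \<and>
     (\<forall>u\<in>V. \<forall>w\<in>V. \<exists>es. is_path T src tgt u es w) \<and>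
     (\<forall>u\<in>V. \<forall>es. is_path T src tgt u es u \<and> reduced bar es \<longrightarrow> es = [])"

text \<open>A finite graph of finite groups: vertex groups Gv v, edge groups Ge e with Ge (bar e) = Ge e,
  and monomorphisms phi e : Ge e \<rightarrow> Gv (tgt e), a \<mapsto> a^e.\<close>

definition finite_graph_of_finite_groups ::
  "'v set \<Rightarrow> 'e set \<Rightarrow> ('e \<Rightarrow> 'e) \<Rightarrow> ('e \<Rightarrow> 'v) \<Rightarrow> ('e \<Rightarrow> 'v)
   \<Rightarrow> ('v \<Rightarrow> 'a monoid) \<Rightarrow> ('e \<Rightarrow> 'a monoid) \<Rightarrow> ('e \<Rightarrow> 'a \<Rightarrow> 'a) \<Rightarrow> bool" where
  "finite_graph_of_finite_groups V E bar src tgt Gv Ge phi \<longleftrightarrow>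
     serre_graph V E bar src tgt \<and> finite V \<and> finite E \<and> V \<noteq> {} \<and>
     (\<forall>v\<in>V. group (Gv v) \<and> finite (carrier (Gv v))) \<and>
     (\<forall>e\<in>E. group (Ge e) \<and> finite (carrier (Ge e)) \<and> Ge (bar e) = Ge e \<and>
             phi e \<in> hom (Ge e) (Gv (tgt e)) \<and> inj_on (phi e) (carrier (Ge e)))"

text \<open>Euler characteristic chi(Gamma) = sum_v 1/|Gamma(v)| - sum_{e in orientation} 1/|Gamma(e)|.
  Since |Gamma(e)| = |Gamma(bar e)|, the sum over an orientation is half the sum over all edges.\<close>

definition euler_char :: "'v set \<Rightarrow> 'e set \<Rightarrow> ('v \<Rightarrow> 'a monoid) \<Rightarrow> ('e \<Rightarrow> 'a monoid) \<Rightarrow> real" where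
  "euler_char V E Gv Ge =
     (\<Sum>v\<in>V. 1 / real (order (Gv v))) - (\<Sum>e\<in>E. 1 / real (order (Ge e))) / 2"

definition m_Gamma :: "'v set \<Rightarrow> ('v \<Rightarrow> 'a monoid) \<Rightarrow> nat" where
  "m_Gamma V Gv = Lcm ((\<lambda>v. order (Gv v)) ` V)"

definition free_rank :: "'v set \<Rightarrow> 'e set \<Rightarrow> ('v \<Rightarrow> 'a monoid) \<Rightarrow> ('e \<Rightarrow> 'a monoid) \<Rightarrow> real" where
  "free_rank V E Gv Ge = 1 - real (m_Gamma V Gv) * euler_char V E Gv Ge"

end

theory Submission
  imports Defs
begin

text \<open>Put \<open>a v = m/|\<Gamma>(v)|\<close> and \<open>b e = m/|\<Gamma>(e)|\<close> with \<open>m = m\<^sub>\<Gamma>\<close>. Then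
  \<open>2\<mu> = 2 - 2 \<Sum>\<^sub>v a v + \<Sum>\<^sub>e b e\<close>, so the claim is \<open>\<Sum>\<^sub>e (b e - 1) \<ge> 2 \<Sum>\<^sub>v a v - 2\<close>.
  By Lagrange \<open>a v \<ge> 1\<close> and \<open>b e \<ge> a (t e)\<close>, and a proper edge group has index at least 2,
  so \<open>b e \<ge> 2 a (o e), 2 a (t e)\<close> on the tree. Rooting the tree at \<open>r\<close> and attaching to every
  other vertex \<open>v\<close> its parent edge \<open>e\<^sub>v\<close>, the pairs \<open>{e\<^sub>v, bar e\<^sub>v}\<close> are disjoint and each contributes
  \<open>2 b e\<^sub>v - 2 \<ge> 2 a v + (2 a (o e\<^sub>v) - 2)\<close>; the nonnegative surplus at a child of \<open>r\<close> pays for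
  \<open>2 a r - 2\<close>.\<close>

lemma order_dvd_of_inj_hom:
  assumes "group H" "group G" "h \<in> hom H G" "inj_on h (carrier H)"
  shows "order H dvd order G"
proof -
  have "subgroup (h ` carrier H) G"
    using assms by (intro group_hom.img_is_subgroup) (simp add: group_hom_def group_hom_axioms_def)
  then have "card (h ` carrier H) dvd order G"
    using group.lagrange[OF assms(2)] by (metis dvd_triv_right)
  then show ?thesis
    using assms(4) by (simp add: card_image order_def)
qed

lemma two_mul_order_le_of_inj_hom:
  assumes "group H" "group G" "finite (carrier G)" "h \<in> hom H G" "inj_on h (carrier H)"
    and proper: "h ` carrier H \<noteq> carrier G"
  shows "2 * order H \<le> order G"
proof -
  obtain c where c: "order G = order H * c"
    using order_dvd_of_inj_hom[OF assms(1,2,4,5)] by blast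
  have "h ` carrier H \<subseteq> carrier G"
    using assms(4) by (auto simp: hom_def)
  then have "card (h ` carrier H) < order G"
    using proper assms(3) unfolding order_def by (meson psubsetI psubset_card_mono)
  then have "order H < order G"
    using assms(5) by (simp add: card_image order_def)
  then have "c \<noteq> 0" "c \<noteq> 1"
    using c by auto
  then have "c \<ge> 2"
    by linarith
  then show ?thesis
    using c by simp
qed

lemma is_path_snoc:
  "is_path F src tgt u (es @ [e]) w \<longleftrightarrow> is_path F src tgt u es (src e) \<and> e \<in> F \<and> tgt e = w"
  by (induction es arbitrary: u) auto

definition path_dist :: "'e set \<Rightarrow> ('e \<Rightarrow> 'v) \<Rightarrow> ('e \<Rightarrow> 'v) \<Rightarrow> 'v \<Rightarrow> 'v \<Rightarrow> nat" where
  "path_dist F src tgt u w = (LEAST n. \<exists>es. is_path F src tgt u es w \<and> length es = n)"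

lemma path_dist_attained:
  assumes "is_path F src tgt u es w"
  obtains es' where "is_path F src tgt u es' w" "length es' = path_dist F src tgt u w"
proof -
  have "\<exists>n es. is_path F src tgt u es w \<and> length es = n"
    using assms by blast
  then have "\<exists>es. is_path F src tgt u es w \<and> length es = path_dist F src tgt u w"
    unfolding path_dist_def by (rule LeastI_ex)
  then show ?thesis
    using that by blast
qed

lemma path_dist_le:
  "is_path F src tgt u es w \<Longrightarrow> path_dist F src tgt u w \<le> length es"
  unfolding path_dist_def by (rule Least_le) blast

lemma shortest_path_last_edge:
  assumes "is_path F src tgt u es w" "w \<noteq> u"
  shows "\<exists>e\<in>F. tgt e = w \<and> path_dist F src tgt u (src e) + 1 = path_dist F src tgt u w"
proof -
  obtain es' where es': "is_path F src tgt u es' w" "length es' = path_dist F src tgt u w"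
    using path_dist_attained[OF assms(1)] .
  then obtain pre e where pre: "es' = pre @ [e]"
    using assms(2) by (cases es' rule: rev_cases) auto
  have pre_path: "is_path F src tgt u pre (src e)" and e: "e \<in> F" "tgt e = w"
    using es'(1) by (auto simp: pre is_path_snoc)
  obtain pre' where "is_path F src tgt u pre' (src e)" "length pre' = path_dist F src tgt u (src e)"
    using path_dist_attained[OF pre_path] .
  then have "path_dist F src tgt u w \<le> path_dist F src tgt u (src e) + 1"
    using path_dist_le[of F src tgt u "pre' @ [e]" w] e by (simp add: is_path_snoc)
  moreover have "path_dist F src tgt u (src e) \<le> path_dist F src tgt u w - 1"
    using path_dist_le[OF pre_path] es'(2) pre by simp
  ultimately show ?thesis
    using e es'(2) pre by (intro bexI[of _ e]) auto
qed

text \<open>Choosing for every non-root vertex the last edge of a shortest path from the root makes the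
  distance to the root drop strictly along these parent edges; a parent edge of minimal distance
  must start at the root.\<close>

lemma parent_edges:
  assumes reach: "\<forall>w\<in>V. \<exists>es. is_path F src tgt r es w"
    and src_in: "\<forall>e\<in>F. src e \<in> V" and "finite V" and nonroot: "V - {r} \<noteq> {}"
  obtains f :: "'v \<Rightarrow> 'e" and d :: "'v \<Rightarrow> nat" and c
  where "\<And>v. v \<in> V - {r} \<Longrightarrow> f v \<in> F \<and> tgt (f v) = v \<and> d (src (f v)) < d v"
    and "c \<in> V - {r}" "src (f c) = r"
proof -
  define d where "d = path_dist F src tgt r"
  have "\<forall>v\<in>V - {r}. \<exists>e\<in>F. tgt e = v \<and> d (src e) + 1 = d v"
    using reach shortest_path_last_edge unfolding d_def by (metis Diff_iff singletonI)
  then obtain f where f: "\<And>v. v \<in> V - {r} \<Longrightarrow> f v \<in> F \<and> tgt (f v) = v \<and> d (src (f v)) + 1 = d v"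
    by metis
  obtain c where c: "c \<in> V - {r}" "\<And>v. v \<in> V - {r} \<Longrightarrow> d c \<le> d v"
  proof -
    have "finite (d ` (V - {r}))" "d ` (V - {r}) \<noteq> {}"
      using \<open>finite V\<close> nonroot by auto
    then obtain c where "c \<in> V - {r}" "d c = Min (d ` (V - {r}))"
      using Min_in by (metis imageE)
    then show ?thesis
      using that \<open>finite (d ` (V - {r}))\<close> by simp
  qed
  have "src (f c) = r"
  proof (rule ccontr)
    assume "src (f c) \<noteq> r"
    then have "src (f c) \<in> V - {r}"
      using src_in f[OF c(1)] by auto
    then show False
      using c f[OF c(1)] by fastforce
  qed
  then show ?thesis
    using that f c(1) by (metis less_add_one)
qed

lemma edge_weight_sum_lower_bound:
  fixes a :: "'v \<Rightarrow> real" and b :: "'e \<Rightarrow> real"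
  assumes "serre_graph V E bar src tgt" "finite V" "finite E"
    and "T \<subseteq> E" "\<forall>w\<in>V. \<exists>es. is_path T src tgt r es w" "r \<in> V" "V \<noteq> {r}"
    and a_ge: "\<And>v. v \<in> V \<Longrightarrow> a v \<ge> 1"
    and b_ge: "\<And>e. e \<in> E \<Longrightarrow> b e \<ge> 1"
    and b_bar: "\<And>e. e \<in> E \<Longrightarrow> b (bar e) = b e"
    and b_tree: "\<And>e. e \<in> T \<Longrightarrow> b e \<ge> 2 * a (src e) \<and> b e \<ge> 2 * a (tgt e)"
  shows "2 * (\<Sum>v\<in>V. a v) - 2 \<le> (\<Sum>e\<in>E. b e - 1)"
proof -
  define W where "W = V - {r}"
  have bar: "\<And>e. e \<in> E \<Longrightarrow> bar e \<in> E \<and> bar (bar e) = e \<and> src e \<in> V \<and> tgt e \<in> V \<and> tgt (bar e) = src e"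
    using assms(1) unfolding serre_graph_def by blast
  then have src_bar: "\<And>e. e \<in> E \<Longrightarrow> src (bar e) = tgt e"
    by metis
  have "\<forall>e\<in>T. src e \<in> V"
    using assms(4) bar by blast
  moreover have "V - {r} \<noteq> {}"
    using assms(6,7) by blast
  ultimately obtain f and d :: "'v \<Rightarrow> nat" and c
    where f: "\<And>v. v \<in> W \<Longrightarrow> f v \<in> T \<and> tgt (f v) = v \<and> d (src (f v)) < d v"
      and c: "c \<in> W" "src (f c) = r"
    unfolding W_def using parent_edges[OF assms(5) _ assms(2)] by blast
  have fE: "\<And>v. v \<in> W \<Longrightarrow> f v \<in> E"
    using f assms(4) by blast
  have "finite W"
    using assms(2) unfolding W_def by simp
  have "inj_on f W"
    using f by (metis inj_onI)
  have "inj_on bar E"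
    by (rule inj_on_inverseI[of _ bar]) (use bar in blast)
  then have "inj_on bar (f ` W)"
    using fE by (blast intro: inj_on_subset)
  have "f ` W \<inter> bar ` f ` W = {}"
  proof (rule ccontr)
    assume "f ` W \<inter> bar ` f ` W \<noteq> {}"
    then obtain v w where "v \<in> W" "w \<in> W" "f v = bar (f w)"
      by auto
    then have "src (f w) = v" "src (f v) = w"
      using f bar src_bar fE by metis+
    then show False
      using f[OF \<open>v \<in> W\<close>] f[OF \<open>w \<in> W\<close>] by auto
  qed
  have "2 * (\<Sum>v\<in>W. a v) + (\<Sum>v\<in>W. 2 * a (src (f v)) - 2)
        = (\<Sum>v\<in>W. 2 * a v + (2 * a (src (f v)) - 2))"
    by (simp add: sum.distrib sum_distrib_left)
  also have "\<dots> \<le> (\<Sum>v\<in>W. 2 * b (f v) - 2)"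
  proof (rule sum_mono)
    fix v assume "v \<in> W"
    then have "f v \<in> T" "tgt (f v) = v"
      using f by auto
    then have "b (f v) \<ge> 2 * a v" "b (f v) \<ge> 2 * a (src (f v))"
      using b_tree[of "f v"] by auto
    then show "2 * a v + (2 * a (src (f v)) - 2) \<le> 2 * b (f v) - 2"
      by linarith
  qed
  also have "\<dots> = (\<Sum>v\<in>W. b (f v) - 1) + (\<Sum>v\<in>W. b (bar (f v)) - 1)"
    using b_bar fE by (simp add: sum.distrib[symmetric])
  also have "\<dots> = (\<Sum>e\<in>f ` W. b e - 1) + (\<Sum>e\<in>bar ` f ` W. b e - 1)"
    using \<open>inj_on f W\<close> comp_inj_on[OF \<open>inj_on f W\<close> \<open>inj_on bar (f ` W)\<close>]
    by (simp add: sum.reindex image_image comp_def)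
  also have "\<dots> = (\<Sum>e\<in>f ` W \<union> bar ` f ` W. b e - 1)"
    using \<open>f ` W \<inter> bar ` f ` W = {}\<close> \<open>finite W\<close> by (intro sum.union_disjoint[symmetric]) auto
  also have "\<dots> \<le> (\<Sum>e\<in>E. b e - 1)"
    using fE bar b_ge assms(3) by (intro sum_mono2) auto
  finally have "2 * (\<Sum>v\<in>W. a v) + (\<Sum>v\<in>W. 2 * a (src (f v)) - 2) \<le> (\<Sum>e\<in>E. b e - 1)" .
  moreover have "2 * a r - 2 \<le> (\<Sum>v\<in>W. 2 * a (src (f v)) - 2)"
  proof -
    have "\<And>v. v \<in> W \<Longrightarrow> 0 \<le> 2 * a (src (f v)) - 2"
      using fE bar a_ge by force
    then show ?thesis
      using member_le_sum[of c W "\<lambda>v. 2 * a (src (f v)) - 2"] c \<open>finite W\<close> by simp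
  qed
  moreover have "(\<Sum>v\<in>V. a v) = a r + (\<Sum>v\<in>W. a v)"
    unfolding W_def using assms(2,6) by (simp add: sum.remove)
  ultimately show ?thesis
    by linarith
qed

definition lcm_quotient :: "'v set \<Rightarrow> ('v \<Rightarrow> 'a monoid) \<Rightarrow> 'a monoid \<Rightarrow> real" where
  "lcm_quotient V Gv G = real (m_Gamma V Gv) / real (order G)"

lemma free_rank_eq_lcm_quotients:
  "free_rank V E Gv Ge =
     1 - (\<Sum>v\<in>V. lcm_quotient V Gv (Gv v)) + (\<Sum>e\<in>E. lcm_quotient V Gv (Ge e)) / 2"
  unfolding free_rank_def euler_char_def lcm_quotient_def
  by (simp add: right_diff_distrib sum_distrib_left)

lemma m_Gamma_pos:
  assumes "finite V" "\<And>v. v \<in> V \<Longrightarrow> order (Gv v) > 0"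
  shows "m_Gamma V Gv > 0"
proof -
  have "Lcm ((\<lambda>v. order (Gv v)) ` V) \<noteq> 0"
    using assms by (subst Lcm_0_iff) (auto simp: image_iff)
  then show ?thesis
    unfolding m_Gamma_def by simp
qed

lemma lcm_quotient_vertex_ge_one:
  assumes "finite_graph_of_finite_groups V E bar src tgt Gv Ge phi" "v \<in> V"
  shows "lcm_quotient V Gv (Gv v) \<ge> 1"
proof -
  have ord_pos: "\<And>w. w \<in> V \<Longrightarrow> order (Gv w) > 0"
    using assms(1) unfolding finite_graph_of_finite_groups_def
    by (meson group.is_monoid monoid.order_gt_0_iff_finite)
  have "order (Gv v) dvd m_Gamma V Gv"
    using assms(2) unfolding m_Gamma_def by (simp add: dvd_Lcm)
  then have "order (Gv v) \<le> m_Gamma V Gv"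
    using m_Gamma_pos[of V Gv] ord_pos assms(1)
    by (simp add: dvd_imp_le finite_graph_of_finite_groups_def)
  then show ?thesis
    using ord_pos[OF assms(2)] unfolding lcm_quotient_def by simp
qed

lemma lcm_quotient_edge_bounds:
  assumes "finite_graph_of_finite_groups V E bar src tgt Gv Ge phi" "e \<in> E"
  shows "lcm_quotient V Gv (Gv (tgt e)) \<le> lcm_quotient V Gv (Ge e)"
    and "phi e ` carrier (Ge e) \<noteq> carrier (Gv (tgt e))
         \<Longrightarrow> 2 * lcm_quotient V Gv (Gv (tgt e)) \<le> lcm_quotient V Gv (Ge e)"
proof -
  have groups: "group (Ge e)" "group (Gv (tgt e))" "finite (carrier (Gv (tgt e)))"
    and phi: "phi e \<in> hom (Ge e) (Gv (tgt e))" "inj_on (phi e) (carrier (Ge e))"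
    using assms unfolding finite_graph_of_finite_groups_def serre_graph_def by auto
  have "order (Gv (tgt e)) > 0"
    using groups by (simp add: monoid.order_gt_0_iff_finite group.is_monoid)
  have ordE: "order (Ge e) > 0"
    using assms unfolding finite_graph_of_finite_groups_def
    by (meson group.is_monoid monoid.order_gt_0_iff_finite)
  have "order (Ge e) \<le> order (Gv (tgt e))"
    using order_dvd_of_inj_hom[OF groups(1,2) phi] \<open>order (Gv (tgt e)) > 0\<close> by (simp add: dvd_imp_le)
  then show "lcm_quotient V Gv (Gv (tgt e)) \<le> lcm_quotient V Gv (Ge e)"
    unfolding lcm_quotient_def using ordE by (simp add: frac_le)
  assume "phi e ` carrier (Ge e) \<noteq> carrier (Gv (tgt e))"
  then have "2 * real (order (Ge e)) \<le> real (order (Gv (tgt e)))"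
    using two_mul_order_le_of_inj_hom[OF groups phi] by linarith
  then have "2 * real (order (Ge e)) * real (m_Gamma V Gv) \<le> real (order (Gv (tgt e))) * real (m_Gamma V Gv)"
    by (rule mult_right_mono) simp
  then show "2 * lcm_quotient V Gv (Gv (tgt e)) \<le> lcm_quotient V Gv (Ge e)"
    unfolding lcm_quotient_def using ordE \<open>order (Gv (tgt e)) > 0\<close>
    by (simp add: field_simps)
qed

theorem lemma5p1:
  fixes V :: "'v set" and E :: "'e set" and bar :: "'e \<Rightarrow> 'e" and src tgt :: "'e \<Rightarrow> 'v"
    and Gv :: "'v \<Rightarrow> 'a monoid" and Ge :: "'e \<Rightarrow> 'a monoid" and phi :: "'e \<Rightarrow> 'a \<Rightarrow> 'a"
    and T :: "'e set"
  assumes "finite_graph_of_finite_groups V E bar src tgt Gv Ge phi"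
    and "spanning_tree V E bar src tgt T"
    and "\<forall>e\<in>T. phi e ` carrier (Ge e) \<noteq> carrier (Gv (tgt e)) \<and>
               phi (bar e) ` carrier (Ge e) \<noteq> carrier (Gv (src e))"
  shows "real (card E) \<le> 2 * free_rank V E Gv Ge"
proof -
  define a where "a v = lcm_quotient V Gv (Gv v)" for v
  define b where "b e = lcm_quotient V Gv (Ge e)" for e
  note graph = assms(1)[unfolded finite_graph_of_finite_groups_def]
  note serre = graph[THEN conjunct1, unfolded serre_graph_def]
  note tree = assms(2)[unfolded spanning_tree_def]
  have a_ge: "\<And>v. v \<in> V \<Longrightarrow> a v \<ge> 1"
    unfolding a_def using lcm_quotient_vertex_ge_one[OF assms(1)] .
  have b_ge: "b e \<ge> 1" if "e \<in> E" for e
  proof -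
    have "a (tgt e) \<ge> 1"
      using a_ge serre that by blast
    then show ?thesis
      using lcm_quotient_edge_bounds(1)[OF assms(1) that] unfolding a_def b_def by linarith
  qed
  have b_bar: "\<And>e. e \<in> E \<Longrightarrow> b (bar e) = b e"
    using graph unfolding b_def by simp
  have b_tree: "b e \<ge> 2 * a (src e) \<and> b e \<ge> 2 * a (tgt e)" if "e \<in> T" for e
  proof -
    have "e \<in> E" "bar e \<in> E" "Ge (bar e) = Ge e" "tgt (bar e) = src e"
      using that tree serre graph by auto
    then show ?thesis
      \<comment> \<open>the bound at the origin is the bound at the terminus of the reversed edge\<close>
      using lcm_quotient_edge_bounds(2)[OF assms(1) \<open>e \<in> E\<close>]
        lcm_quotient_edge_bounds(2)[OF assms(1) \<open>bar e \<in> E\<close>] assms(3) that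
      unfolding a_def b_def by auto
  qed
  obtain r where "r \<in> V"
    using graph by blast
  have "2 * (\<Sum>v\<in>V. a v) - 2 \<le> (\<Sum>e\<in>E. b e - 1)"
  proof (cases "V = {r}")
    case True
    have "order (Gv r) > 0"
      using graph \<open>r \<in> V\<close> by (simp add: group.is_monoid monoid.order_gt_0_iff_finite)
    then have "a r = 1"
      unfolding a_def lcm_quotient_def m_Gamma_def True by simp
    moreover have "0 \<le> (\<Sum>e\<in>E. b e - 1)"
      using b_ge by (simp add: sum_nonneg)
    ultimately show ?thesis
      using True by simp
  next
    case False
    have "finite V" "finite E" "T \<subseteq> E" "\<forall>w\<in>V. \<exists>es. is_path T src tgt r es w"
      using graph tree \<open>r \<in> V\<close> by auto
    with False show ?thesis
      using edge_weight_sum_lower_bound[of V E bar src tgt T r a b] graph \<open>r \<in> V\<close>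
        a_ge b_ge b_bar b_tree by simp
  qed
  then show ?thesis
    unfolding free_rank_eq_lcm_quotients a_def b_def by (simp add: sum_subtractf)
qed

end
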